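(* Let $d$ be an odd prime, with $\Pi^j_k$ and $\Omega$ as in the context. Every $\rho\in\Omega$ has the following properties: (a) $\rho$ is Hermitian, $\mathrm{Tr}(\rho)=1$ and $\mathrm{Tr}(\rho^2)=1$; (b) $\mathrm{Tr}(\rho\Pi^j_k)=p^j_k$ for all $j,k$; (c) $\sum_{k=0}^{d-1}(p^j_k)^2=\frac{2}{d+1}$ for every $j=0,\dots,d$, and $\sum_{k=0}^{d-1}p^j_kp^j_{k+r}=\frac{1}{d+1}$ for every $j$ and every $r=1,\dots,d-1$, with indices modulo $d$.
   Context: Let $d$ be an odd prime and $\omega=e^{2\pi i/d}$; for real $x$, $\omega^{x}$ means $e^{2\pi i x/d}$. Let $\{|k\rangle\}_{k=0}^{d-1}$ be the computational basis of $\mathbb{C}^d$, with indices taken modulo $d$. Let $X|k\rangle=|k+1\rangle$ and $Z|k\rangle=\omega^k|k\rangle$, and $\tau=-e^{i\pi/d}$. For $\mathbf p=(p_1,p_2)\in\mathbb{Z}_d^2$ set $D_{\mathbf p}=\tau^{p_1p_2}X^{p_1}Z^{p_2}$. For $j\in\{0,\dots,d-1\}$, let $\Pi^j_k$ be the rank-one projector onto the eigenvector of $D_{(1,j)}$ with eigenvalue $\omega^k$. Let $\Pi^d_k=|k\rangle\langle k|$. These $d+1$ orthonormal bases are mutually unbiased. $\Omega$ denotes the set of all operators $\rho=\sum_{j=0}^{d}\sum_{k=0}^{d-1}\big(p^j_k-\tfrac{1}{d+1}\big)\Pi^j_k$ with $p^j_k=\frac1d+\frac{1}{d\sqrt{d+1}}\sum_{r=1}^{d-1}\omega^{\alpha^j_r+kr}$,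 where the $\alpha^j_r\in\mathbb{R}$ ($j=0,\dots,d$, $r=1,\dots,d-1$) satisfy $\alpha^j_{d-r}=-\alpha^j_r$. Here $p^j_k$ refers to the numbers defining $\rho$. *)

theory Defs
  imports Complex_Main "Jordan_Normal_Form.Matrix"
begin

definition omg :: "nat \<Rightarrow> real \<Rightarrow> complex" where
  "omg d x = exp (2 * pi * \<i> * complex_of_real x / of_nat d)"

definition tau :: "nat \<Rightarrow> complex" where
  "tau d = - exp (\<i> * complex_of_real pi / of_nat d)"

definition Xop :: "nat \<Rightarrow> complex mat" where
  "Xop d = mat d d (\<lambda>(a, b). if a = (b + 1) mod d then 1 else 0)"

definition Zop :: "nat \<Rightarrow> complex mat" where
  "Zop d = mat d d (\<lambda>(a, b). if a = b then omg d (real a) else 0)"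

definition Dop :: "nat \<Rightarrow> nat \<Rightarrow> nat \<Rightarrow> complex mat" where
  "Dop d p1 p2 = (tau d ^ (p1 * p2)) \<cdot>\<^sub>m (Xop d ^\<^sub>m p1 * Zop d ^\<^sub>m p2)"

definition unit_vec_c :: "nat \<Rightarrow> complex vec \<Rightarrow> bool" where
  "unit_vec_c d v \<longleftrightarrow> v \<in> carrier_vec d \<and> (\<Sum>i<d. (cmod (v $ i))\<^sup>2) = 1"

definition outer :: "nat \<Rightarrow> complex vec \<Rightarrow> complex mat" where
  "outer d v = mat d d (\<lambda>(a, b). v $ a * cnj (v $ b))"

definition Proj :: "nat \<Rightarrow> nat \<Rightarrow> nat \<Rightarrow> complex mat" where
  "Proj d j k =
     (if j < d then
        outer d (SOME v. unit_vec_c d v \<and> Dop d 1 j *\<^sub>v v = omg d (real k) \<cdot>\<^sub>v v)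
      else outer d (unit_vec d k))"

definition mtrace :: "complex mat \<Rightarrow> complex" where
  "mtrace A = (\<Sum>i<dim_row A. A $$ (i, i))"

definition hermitian_mat :: "nat \<Rightarrow> complex mat \<Rightarrow> bool" where
  "hermitian_mat d A \<longleftrightarrow> A \<in> carrier_mat d d \<and>
     (\<forall>a<d. \<forall>b<d. A $$ (a, b) = cnj (A $$ (b, a)))"

definition pjk :: "nat \<Rightarrow> (nat \<Rightarrow> nat \<Rightarrow> real) \<Rightarrow> nat \<Rightarrow> nat \<Rightarrow> complex" where
  "pjk d \<alpha> j k = 1 / of_nat d + 1 / (of_nat d * complex_of_real (sqrt (real d + 1))) *
      (\<Sum>r = 1..d - 1. omg d (\<alpha> j r + real k * real r))"

definition rho :: "nat \<Rightarrow> (nat \<Rightarrow> nat \<Rightarrow> real) \<Rightarrow> complex mat" where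
  "rho d \<alpha> = mat d d (\<lambda>(a, b). \<Sum>j\<le>d. \<Sum>k<d.
      (pjk d \<alpha> j k - 1 / (of_nat d + 1)) * Proj d j k $$ (a, b))"

definition admissible_alpha :: "nat \<Rightarrow> (nat \<Rightarrow> nat \<Rightarrow> real) \<Rightarrow> bool" where
  "admissible_alpha d \<alpha> \<longleftrightarrow> (\<forall>j\<le>d. \<forall>r\<in>{1..d-1}. \<alpha> j (d - r) = - \<alpha> j r)"

definition Omega :: "nat \<Rightarrow> complex mat set" where
  "Omega d = {rho d \<alpha> | \<alpha>. admissible_alpha d \<alpha>}"

end

theory Submission
  imports Defs "HOL-Computational_Algebra.Primes"
begin

text \<open>Let \<open>h = (d + 1)/2\<close> be the inverse of 2 modulo \<open>d\<close>. For \<open>j < d\<close> the vector with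
  coordinates \<open>\<omega>^(j h a\<^sup>2 - k a) / \<surd>d\<close> is an eigenvector of \<open>D_(1,j)\<close> for the eigenvalue
  \<open>\<omega>^k\<close>, and it spans the whole eigenspace, so \<open>\<Pi>^j_k\<close> is explicit. The overlap of two
  such vectors from different bases is a quadratic Gauss sum with nonzero leading coefficient,
  of modulus \<open>\<surd>d\<close>, which gives \<open>Tr(\<Pi>^j_k \<Pi>^J_K) = 1/d\<close> for \<open>j \<noteq> J\<close>. Hence
  \<open>Tr(\<rho> \<Pi>^J_K) = (p^J_K - 1/(d+1)) + d \<cdot> (1/d) \<cdot> (1/(d+1)) = p^J_K\<close>, using
  \<open>\<Sum>\<^sub>k p^j_k = 1\<close>. The identities for the \<open>p^j_k\<close> are orthogonality of additive characters;
  in \<open>\<Sum>\<^sub>k p^j_k p^j_(k+s)\<close> only the pairs \<open>(r, d - r)\<close> survive, where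
  \<open>\<alpha>^j_r + \<alpha>^j_(d-r) = 0\<close>. Finally \<open>Tr(\<rho>\<^sup>2) = \<Sum> (p - 1/(d+1)) p = (d+1)(2 - 1)/(d+1) = 1\<close>.\<close>

lemma dvd_abs_less_imp_zero:
  fixes n x :: int
  assumes "n dvd x" and "\<bar>x\<bar> < \<bar>n\<bar>"
  shows "x = 0"
  using assms dvd_imp_le_int[of x n] by (cases "x = 0") simp_all

lemma sum_lessThan_shift_periodic:
  fixes F :: "int \<Rightarrow> 'a::comm_monoid_add"
  assumes periodic: "\<And>x. F (x + int n) = F x"
  shows "(\<Sum>t<n. F (int s + int t)) = (\<Sum>t<n. F (int t))"
proof (induction s)
  case (Suc s)
  have rotate: "(\<Sum>t<n. G (Suc t)) = (\<Sum>t<n. G t)" if "G n = G 0" for G :: "nat \<Rightarrow> 'a"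
  proof (cases n)
    case (Suc m)
    then have "(\<Sum>t<n. G (Suc t)) = G 0 + (\<Sum>t<m. G (Suc t))"
      using that by (simp add: add.commute)
    then show ?thesis using Suc by (simp only: sum.lessThan_Suc_shift)
  qed simp
  have "(\<Sum>t<n. F (int (Suc s) + int t)) = (\<Sum>t<n. F (int s + int (Suc t)))"
    by (simp add: add_ac)
  also have "\<dots> = (\<Sum>t<n. F (int s + int t))"
    by (rule rotate) (simp add: periodic[of "int s", simplified add_ac] add_ac)
  finally show ?case using Suc by simp
qed simp

lemma sum_swap_outer_pairs:
  "(\<Sum>a\<in>A. \<Sum>b\<in>B. \<Sum>j\<in>C. \<Sum>k\<in>D. f a b j k) = (\<Sum>j\<in>C. \<Sum>k\<in>D. \<Sum>a\<in>A. \<Sum>b\<in>B. f a b j k)"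
proof -
  have "(\<Sum>a\<in>A. \<Sum>b\<in>B. \<Sum>j\<in>C. \<Sum>k\<in>D. f a b j k) = (\<Sum>a\<in>A. \<Sum>j\<in>C. \<Sum>b\<in>B. \<Sum>k\<in>D. f a b j k)"
    by (rule sum.cong[OF refl], rule sum.swap)
  also have "\<dots> = (\<Sum>a\<in>A. \<Sum>j\<in>C. \<Sum>k\<in>D. \<Sum>b\<in>B. f a b j k)"
    by (rule sum.cong[OF refl], rule sum.cong[OF refl], rule sum.swap)
  also have "\<dots> = (\<Sum>j\<in>C. \<Sum>a\<in>A. \<Sum>k\<in>D. \<Sum>b\<in>B. f a b j k)"
    by (rule sum.swap)
  also have "\<dots> = (\<Sum>j\<in>C. \<Sum>k\<in>D. \<Sum>a\<in>A. \<Sum>b\<in>B. f a b j k)"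
    by (rule sum.cong[OF refl], rule sum.swap)
  finally show ?thesis .
qed

lemma inverse_add_fraction_eq:
  fixes x :: "'a::field"
  assumes x: "x \<noteq> 0" and x1: "x + 1 \<noteq> 0"
  shows "1 / x + ((if b then x else 0) - 1) / (x * (x + 1)) = (if b then 2 else 1) / (x + 1)"
proof -
  define y where "y = x + 1"
  have "1 / x + ((if b then x else 0) - 1) / (x * y) = (y + (if b then x else 0) - 1) / (x * y)"
    using x x1 unfolding y_def[symmetric] by (simp add: field_simps)
  also have "y + (if b then x else 0) - 1 = x * (if b then 2 else 1)"
    unfolding y_def by simp
  finally show ?thesis unfolding y_def using x by simp
qed

lemma mtrace_mult:
  assumes "A \<in> carrier_mat n n" and "B \<in> carrier_mat n n"
  shows "mtrace (A * B) = (\<Sum>a<n. \<Sum>b<n. A $$ (a, b) * B $$ (b, a))"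
  unfolding mtrace_def using assms
  by (intro sum.cong) (auto simp: scalar_prod_def lessThan_atLeast0)

subsection \<open>Roots of unity\<close>

lemma omg_eq_cis: "omg d x = cis (2 * pi * x / d)"
  unfolding omg_def cis_conv_exp by (simp add: mult_ac)

lemma omg_add: "omg d (x + y) = omg d x * omg d y"
  by (simp add: omg_eq_cis cis_mult add_divide_distrib ring_distribs)

lemma cnj_omg: "cnj (omg d x) = omg d (- x)"
  by (simp add: omg_eq_cis cis_cnj)

definition zeta :: "nat \<Rightarrow> int \<Rightarrow> complex" where
  "zeta d n = omg d (of_int n)"

lemma omg_of_nat [simp]: "omg d (real a) = zeta d (int a)"
  by (simp add: zeta_def)

lemma zeta_add: "zeta d (x + y) = zeta d x * zeta d y"
  by (simp add: zeta_def omg_add)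

lemma cnj_zeta: "cnj (zeta d x) = zeta d (- x)"
  by (simp add: zeta_def cnj_omg)

lemma norm_zeta [simp]: "cmod (zeta d x) = 1"
  by (simp add: zeta_def omg_eq_cis)

lemma zeta_0 [simp]: "zeta d 0 = 1"
  by (simp add: zeta_def omg_eq_cis)

lemma zeta_nonzero: "zeta d x \<noteq> 0"
  using norm_zeta[of d x] by (metis norm_zero zero_neq_one)

lemma zeta_power: "zeta d (n * int a) = zeta d n ^ a"
  by (induction a) (simp_all add: zeta_add ring_distribs)

lemma zeta_eq_1_iff:
  assumes "d > 0"
  shows "zeta d n = 1 \<longleftrightarrow> int d dvd n"
proof
  assume "zeta d n = 1"
  then have "cos (2 * pi * n / d) = 1" unfolding zeta_def omg_eq_cis
    by (metis Re_complex_of_real complex_Re_of_int cis.sel(1) of_real_1)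
  then obtain m :: int where "2 * pi * n / d = real_of_int m * 2 * pi"
    using cos_one_2pi_int by blast
  then have "real_of_int n = real_of_int (m * int d)" using assms by (simp add: field_simps)
  then have "n = m * int d" by (simp only: of_int_eq_iff)
  then show "int d dvd n" by simp
next
  assume "int d dvd n"
  then obtain m where "n = int d * m" by blast
  then have "2 * pi * real_of_int n / d = 2 * pi * real_of_int m" using assms by (simp add: field_simps)
  then show "zeta d n = 1" unfolding zeta_def omg_eq_cis by simp
qed

lemma zeta_cong:
  assumes "d > 0" and "int d dvd x - y"
  shows "zeta d x = zeta d y"
proof -
  have "zeta d x = zeta d (x - y) * zeta d y" by (simp flip: zeta_add)
  then show ?thesis using zeta_eq_1_iff[OF assms(1)] assms(2) by simp
qed

lemma sum_zeta_mult:
  assumes "d > 0"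
  shows "(\<Sum>a<d. zeta d (n * int a)) = (if int d dvd n then of_nat d else 0)"
proof -
  have "(\<Sum>a<d. zeta d (n * int a)) = (\<Sum>a<d. zeta d n ^ a)" by (simp add: zeta_power)
  also have "\<dots> = (if zeta d n = 1 then of_nat d else (1 - zeta d n ^ d) / (1 - zeta d n))"
    by (rule sum_gp_strict)
  also have "zeta d n ^ d = 1"
    using zeta_power[of d n d] zeta_eq_1_iff[OF assms, of "n * int d"] by simp
  finally show ?thesis using zeta_eq_1_iff[OF assms] by simp
qed

text \<open>The hypothesis says that \<open>2c\<close> is invertible modulo \<open>d\<close>; after the substitution
  \<open>a = b + t\<close> the inner sum over \<open>b\<close> vanishes unless \<open>t = 0\<close>.\<close>

lemma quadratic_gauss_sum_norm_sq:
  fixes c \<beta> :: int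
  assumes d: "d > 0" and invertible: "\<And>t. int d dvd 2 * c * t \<Longrightarrow> int d dvd t"
  defines "S \<equiv> \<Sum>a<d. zeta d (c * (int a)\<^sup>2 + \<beta> * int a)"
  shows "S * cnj S = of_nat d"
proof -
  define Q where "Q x = c * x\<^sup>2 + \<beta> * x" for x :: int
  have expand: "Q (int b + int t) - Q (int b) = Q (int t) + 2 * c * int t * int b" for b t
    unfolding Q_def by (simp add: algebra_simps power2_eq_square)
  have inner: "(\<Sum>a<d. zeta d (Q (int a) - Q (int b)))
      = (\<Sum>t<d. zeta d (Q (int t)) * zeta d (2 * c * int t * int b))" for b
  proof -
    have periodic: "zeta d (Q (x + int d) - Q (int b)) = zeta d (Q x - Q (int b))" for x
    proof (rule zeta_cong[OF d])
      have "Q (x + int d) - Q (int b) - (Q x - Q (int b)) = int d * (c * (2 * x + int d) + \<beta>)"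
        unfolding Q_def by (simp add: algebra_simps power2_eq_square)
      then show "int d dvd Q (x + int d) - Q (int b) - (Q x - Q (int b))" by simp
    qed
    show ?thesis
      using sum_lessThan_shift_periodic[of "\<lambda>x. zeta d (Q x - Q (int b))" d b] periodic
      by (simp add: expand zeta_add)
  qed
  have vanish: "(\<Sum>b<d. zeta d (2 * c * int t * int b)) = (if t = 0 then of_nat d else 0)"
    if "t < d" for t
  proof -
    have "int d dvd 2 * c * int t \<longleftrightarrow> t = 0"
      using invertible[of "int t"] nat_dvd_not_less[of t d] \<open>t < d\<close> by auto
    then show ?thesis by (simp add: sum_zeta_mult[OF d])
  qed
  have "S = (\<Sum>a<d. zeta d (Q (int a)))"
    unfolding S_def Q_def ..
  then have "S * cnj S = (\<Sum>a<d. \<Sum>b<d. zeta d (Q (int a) - Q (int b)))"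
    by (simp add: sum_product cnj_zeta flip: zeta_add)
  also have "\<dots> = (\<Sum>b<d. \<Sum>a<d. zeta d (Q (int a) - Q (int b)))"
    by (rule sum.swap)
  also have "\<dots> = (\<Sum>b<d. \<Sum>t<d. zeta d (Q (int t)) * zeta d (2 * c * int t * int b))"
    by (simp only: inner)
  also have "\<dots> = (\<Sum>t<d. zeta d (Q (int t)) * (\<Sum>b<d. zeta d (2 * c * int t * int b)))"
    by (subst sum.swap) (simp add: sum_distrib_left)
  also have "\<dots> = (\<Sum>t<d. if t = 0 then of_nat d else 0)"
    by (intro sum.cong refl) (simp add: vanish Q_def)
  also have "\<dots> = of_nat d"
    using d by simp
  finally show ?thesis .
qed

subsection \<open>Eigenvectors of the displacement operators\<close>

locale odd_prime_dim =
  fixes d :: nat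
  assumes prime_d: "prime d" and odd_d: "odd d"
begin

lemma d_pos: "d > 0"
  using prime_d prime_gt_0_nat by blast

lemma of_nat_d_plus_1_nonzero: "(of_nat d + 1 :: complex) \<noteq> 0"
  by (metis of_nat_Suc of_nat_eq_0_iff add.commute nat.simps(3))

lemma dvd_int_d_iff_eq_0: "t < d \<Longrightarrow> int d dvd int t \<longleftrightarrow> t = 0"
  using nat_dvd_not_less[of t d] by auto

lemma dvd_int_d_diff_iff_eq:
  "j < d \<Longrightarrow> J < d \<Longrightarrow> int d dvd int J - int j \<longleftrightarrow> J = j"
  using dvd_abs_less_imp_zero[of "int d" "int J - int j"] by auto

definition inv2 :: nat where
  "inv2 = (d + 1) div 2"

lemma two_inv2: "2 * int inv2 = int d + 1"
  using odd_d unfolding inv2_def by (auto elim: oddE)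

lemma tau_power: "tau d ^ j = zeta d (int j * int inv2)"
proof -
  have "2 * real inv2 = real d + 1"
    using two_inv2 by (metis of_int_of_nat_eq of_int_add of_int_mult of_int_numeral of_int_1)
  then have "2 * pi * real inv2 / real d = pi + pi / d"
    using d_pos by (simp add: field_simps)
  then have "zeta d (int inv2) = - cis (pi / d)"
    by (simp add: zeta_def omg_eq_cis flip: cis_mult)
  then have "tau d = zeta d (int inv2)"
    unfolding tau_def cis_conv_exp by (simp add: mult_ac)
  then show ?thesis using zeta_power[of d "int inv2" j] by (simp add: mult.commute)
qed

lemma Zop_entry: "a < d \<Longrightarrow> b < d \<Longrightarrow> Zop d $$ (a, b) = (if a = b then zeta d (int a) else 0)"
  by (simp add: Zop_def)

lemma Zop_carrier: "Zop d \<in> carrier_mat d d"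
  by (simp add: Zop_def)

lemma Zop_power: "Zop d ^\<^sub>m n = mat d d (\<lambda>(a, b). if a = b then zeta d (int n * int a) else 0)"
proof (induction n)
  case 0
  show ?case by (rule eq_matI) (auto simp: Zop_def)
next
  case (Suc n)
  have "(Zop d ^\<^sub>m n * Zop d) $$ (a, b) = (if a = b then zeta d (int (Suc n) * int a) else 0)"
    if a: "a < d" and b: "b < d" for a b
  proof -
    have "(Zop d ^\<^sub>m n * Zop d) $$ (a, b)
        = (\<Sum>c<d. (if a = c then zeta d (int n * int a) else 0) * (if c = b then zeta d (int c) else 0))"
      unfolding Suc.IH using a b Zop_carrier by (simp add: Zop_entry scalar_prod_def lessThan_atLeast0)
    also have "\<dots> = (\<Sum>c<d. if c = a then (if a = b then zeta d (int n * int a) * zeta d (int a) else 0) else 0)"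
      by (rule sum.cong) auto
    finally show ?thesis using a by (simp add: ring_distribs add_ac flip: zeta_add)
  qed
  then show ?case by (intro eq_matI) (auto simp: Zop_def)
qed

lemma Dop_entry:
  assumes a: "a < d" and b: "b < d"
  shows "Dop d 1 j $$ (a, b) = (if a = (b + 1) mod d then tau d ^ j * zeta d (int j * int b) else 0)"
proof -
  have "(Xop d * Zop d ^\<^sub>m j) $$ (a, b)
      = (\<Sum>c<d. (if a = (c + 1) mod d then 1 else 0) * (if c = b then zeta d (int j * int c) else 0))"
    using a b by (simp add: Zop_power Xop_def scalar_prod_def lessThan_atLeast0)
  also have "\<dots> = (\<Sum>c<d. if c = b then (if a = (b + 1) mod d then zeta d (int j * int b) else 0) else 0)"
    by (rule sum.cong) auto
  finally show ?thesis
    using a b Xop_def by (simp add: Dop_def Zop_power)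
qed

lemma Dop_carrier: "Dop d 1 j \<in> carrier_mat d d"
  unfolding Dop_def by (intro smult_carrier_mat mult_carrier_mat[of _ d d _ d]) (simp_all add: Zop_power Xop_def)

lemma Dop_mult_vec:
  assumes a: "a < d" and v: "dim_vec v = d"
  shows "(Dop d 1 j *\<^sub>v v) $ a =
    (if a = 0 then tau d ^ j * zeta d (int j * int (d - 1)) * v $ (d - 1)
     else tau d ^ j * zeta d (int j * int (a - 1)) * v $ (a - 1))"
proof -
  define pred where "pred = (if a = 0 then d - 1 else a - 1)"
  have pred: "pred < d" using a d_pos unfolding pred_def by auto
  have succ_iff: "a = (b + 1) mod d \<longleftrightarrow> b = pred" if "b < d" for b
    using that a d_pos unfolding pred_def
    by (cases "b + 1 = d") (auto simp: mod_if)
  have "(Dop d 1 j *\<^sub>v v) $ a = (\<Sum>b<d. Dop d 1 j $$ (a, b) * v $ b)"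
    using a v Dop_carrier[of j] by (simp add: scalar_prod_def lessThan_atLeast0)
  also have "\<dots> = (\<Sum>b<d. if b = pred then tau d ^ j * zeta d (int j * int b) * v $ b else 0)"
  proof (intro sum.cong refl)
    fix b assume "b \<in> {..<d}"
    then have b: "b < d" by simp
    show "Dop d 1 j $$ (a, b) * v $ b = (if b = pred then tau d ^ j * zeta d (int j * int b) * v $ b else 0)"
      unfolding Dop_entry[OF a b] succ_iff[OF b] by simp
  qed
  also have "\<dots> = tau d ^ j * zeta d (int j * int pred) * v $ pred"
    using pred by simp
  finally show ?thesis unfolding pred_def by (simp split: if_splits)
qed

definition chirp :: "nat \<Rightarrow> nat \<Rightarrow> nat \<Rightarrow> complex" where
  "chirp j k a = zeta d (int j * int inv2 * (int a)\<^sup>2 - int k * int a)"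

lemma norm_chirp [simp]: "cmod (chirp j k a) = 1"
  by (simp add: chirp_def)

lemma chirp_0 [simp]: "chirp j k 0 = 1"
  by (simp add: chirp_def)

text \<open>Both eigenvalue equations for \<open>chirp j k\<close> reduce to \<open>2 inv2 \<equiv> 1 (mod d)\<close>.\<close>

lemma chirp_Suc:
  "zeta d (int k) * chirp j k (Suc a) = tau d ^ j * zeta d (int j * int a) * chirp j k a"
proof -
  let ?e = "\<lambda>a. int j * int inv2 * (int a)\<^sup>2 - int k * int a"
  have "int k + ?e (Suc a) - (int j * int inv2 + int j * int a + ?e a) = int j * int a * (2 * int inv2 - 1)"
    by (simp add: algebra_simps power2_eq_square)
  also have "\<dots> = int d * (int j * int a)"
    using two_inv2 by simp
  finally have "zeta d (int k + ?e (Suc a)) = zeta d (int j * int inv2 + int j * int a + ?e a)"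
    using zeta_cong[OF d_pos] by (metis dvd_triv_left)
  then show ?thesis by (simp add: chirp_def tau_power zeta_add)
qed

lemma chirp_wrap:
  "zeta d (int k) * chirp j k 0 = tau d ^ j * zeta d (int j * int (d - 1)) * chirp j k (d - 1)"
proof -
  define D where "D = int d"
  have d1: "int (d - Suc 0) = D - 1" using d_pos unfolding D_def by simp
  have "(int j * int inv2 + int j * (D - 1) + (int j * int inv2 * (D - 1)\<^sup>2 - int k * (D - 1))) - int k
      = D * (int j * int inv2 * (D - 2) + int j - int k) + int j * (2 * int inv2 - 1)"
    by (simp add: algebra_simps power2_eq_square)
  also have "\<dots> = D * (int j * int inv2 * (D - 2) + int j - int k + int j)"
    using two_inv2 unfolding D_def by (simp add: algebra_simps)
  finally have "zeta d (int j * int inv2 + int j * (D - 1) + (int j * int inv2 * (D - 1)\<^sup>2 - int k * (D - 1)))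
      = zeta d (int k)"
    using zeta_cong[OF d_pos] unfolding D_def by (metis dvd_triv_left)
  then show ?thesis by (simp add: chirp_def tau_power zeta_add d1)
qed

lemma eigenvector_exists:
  assumes "k < d"
  shows "\<exists>v. unit_vec_c d v \<and> Dop d 1 j *\<^sub>v v = omg d (real k) \<cdot>\<^sub>v v"
proof -
  define v where "v = vec d (\<lambda>a. chirp j k a / complex_of_real (sqrt (real d)))"
  have "(\<Sum>i<d. (cmod (v $ i))\<^sup>2) = (\<Sum>i<d. 1 / real d)"
    by (rule sum.cong) (simp_all add: v_def norm_divide power_divide)
  then have "unit_vec_c d v" unfolding unit_vec_c_def v_def using d_pos by simp
  moreover have "Dop d 1 j *\<^sub>v v = omg d (real k) \<cdot>\<^sub>v v"
  proof (rule eq_vecI)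
    fix a assume "a < dim_vec (omg d (real k) \<cdot>\<^sub>v v)"
    then have a: "a < d" by (simp add: v_def)
    have dv: "dim_vec v = d" by (simp add: v_def)
    show "(Dop d 1 j *\<^sub>v v) $ a = (omg d (real k) \<cdot>\<^sub>v v) $ a"
    proof (cases a)
      case 0
      then show ?thesis unfolding Dop_mult_vec[OF a dv] using a d_pos chirp_wrap[of k j]
        by (simp add: v_def)
    next
      case (Suc a')
      then show ?thesis unfolding Dop_mult_vec[OF a dv] using a chirp_Suc[of k j a']
        by (simp add: v_def)
    qed
  qed (use Dop_carrier[of j] in \<open>simp add: v_def\<close>)
  ultimately show ?thesis by blast
qed

lemma eigenvector_coords:
  assumes v: "dim_vec v = d" and eig: "Dop d 1 j *\<^sub>v v = omg d (real k) \<cdot>\<^sub>v v"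
  shows "a < d \<Longrightarrow> v $ a = v $ 0 * chirp j k a"
proof (induction a)
  case (Suc a)
  then have a: "a < d" and sa: "Suc a < d" by auto
  have "(Dop d 1 j *\<^sub>v v) $ Suc a = (omg d (real k) \<cdot>\<^sub>v v) $ Suc a" using eig by simp
  then have "zeta d (int k) * v $ Suc a = tau d ^ j * zeta d (int j * int a) * v $ a"
    unfolding Dop_mult_vec[OF sa v] using sa v by simp
  also have "\<dots> = v $ 0 * (zeta d (int k) * chirp j k (Suc a))"
    by (simp add: chirp_Suc Suc.IH[OF a] mult_ac)
  finally show ?case using zeta_nonzero[of d "int k"] by simp
qed simp

lemma Proj_entry_chirp:
  assumes j: "j < d" and k: "k < d" and a: "a < d" and b: "b < d"
  shows "Proj d j k $$ (a, b) = chirp j k a * cnj (chirp j k b) / of_nat d"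
proof -
  define v where "v = (SOME v. unit_vec_c d v \<and> Dop d 1 j *\<^sub>v v = omg d (real k) \<cdot>\<^sub>v v)"
  have "unit_vec_c d v \<and> Dop d 1 j *\<^sub>v v = omg d (real k) \<cdot>\<^sub>v v"
    unfolding v_def by (rule someI_ex) (rule eigenvector_exists[OF k])
  then have unit: "unit_vec_c d v" and eig: "Dop d 1 j *\<^sub>v v = omg d (real k) \<cdot>\<^sub>v v" by auto
  have dv: "dim_vec v = d" using unit unfolding unit_vec_c_def by auto
  note coords = eigenvector_coords[OF dv eig]
  have "1 = (\<Sum>i<d. (cmod (v $ i))\<^sup>2)" using unit unfolding unit_vec_c_def by simp
  also have "\<dots> = (\<Sum>i<d. (cmod (v $ 0))\<^sup>2)"
  proof (intro sum.cong refl)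
    fix i assume "i \<in> {..<d}"
    then have "v $ i = v $ 0 * chirp j k i" by (intro coords) simp
    then show "(cmod (v $ i))\<^sup>2 = (cmod (v $ 0))\<^sup>2" by (simp add: norm_mult)
  qed
  finally have "(cmod (v $ 0))\<^sup>2 = 1 / real d" using d_pos by (simp add: field_simps)
  then have v0: "v $ 0 * cnj (v $ 0) = 1 / of_nat d"
    by (simp flip: complex_norm_square)
  have "Proj d j k $$ (a, b) = v $ a * cnj (v $ b)"
    unfolding Proj_def using j a b by (simp add: outer_def v_def)
  also have "\<dots> = (v $ 0 * cnj (v $ 0)) * (chirp j k a * cnj (chirp j k b))"
    by (subst coords[OF a], subst coords[OF b]) (simp only: complex_cnj_mult mult_ac)
  finally show ?thesis unfolding v0 by simp
qed

subsection \<open>The mutually unbiased bases\<close>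

definition mub :: "nat \<Rightarrow> nat \<Rightarrow> nat \<Rightarrow> complex" where
  "mub j k a = (if j < d then chirp j k a / complex_of_real (sqrt (real d)) else if a = k then 1 else 0)"

lemma sqrt_d_square: "complex_of_real (sqrt (real d)) * complex_of_real (sqrt (real d)) = of_nat d"
  unfolding of_real_mult[symmetric] by simp

lemma Proj_entry:
  assumes j: "j \<le> d" and k: "k < d" and a: "a < d" and b: "b < d"
  shows "Proj d j k $$ (a, b) = mub j k a * cnj (mub j k b)"
proof (cases "j < d")
  case True
  have "mub j k a * cnj (mub j k b) = chirp j k a * cnj (chirp j k b)
      / (complex_of_real (sqrt (real d)) * complex_of_real (sqrt (real d)))"
    unfolding mub_def using True by (simp add: complex_cnj_divide)
  then show ?thesis unfolding Proj_entry_chirp[OF True k a b] sqrt_d_square by simp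
next
  case False
  then have "Proj d j k = outer d (unit_vec d k)"
    unfolding Proj_def using False by simp
  then show ?thesis using a b k False by (simp add: mub_def outer_def)
qed

lemma Proj_carrier: "Proj d j k \<in> carrier_mat d d"
  unfolding Proj_def outer_def by (split if_split) (intro conjI impI mat_carrier)

lemma cnj_mub_mult_mub:
  assumes "j < d" and "J < d"
  shows "cnj (mub j k a) * mub J K a =
    zeta d ((int J - int j) * int inv2 * (int a)\<^sup>2 + (int k - int K) * int a) / of_nat d"
proof -
  have "cnj (mub j k a) * mub J K a = cnj (chirp j k a) * chirp J K a
      / (complex_of_real (sqrt (real d)) * complex_of_real (sqrt (real d)))"
    unfolding mub_def using assms by (simp add: complex_cnj_divide)
  also have "cnj (chirp j k a) * chirp J K a
      = zeta d ((int J - int j) * int inv2 * (int a)\<^sup>2 + (int k - int K) * int a)"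
  proof -
    have "- (int j * int inv2 * (int a)\<^sup>2 - int k * int a) + (int J * int inv2 * (int a)\<^sup>2 - int K * int a)
        = (int J - int j) * int inv2 * (int a)\<^sup>2 + (int k - int K) * int a"
      by (simp add: algebra_simps)
    then show ?thesis unfolding chirp_def cnj_zeta zeta_add[symmetric] by simp
  qed
  finally show ?thesis unfolding sqrt_d_square .
qed

lemma mub_norm_sq: "j < d \<Longrightarrow> mub j k a * cnj (mub j k a) = 1 / of_nat d"
  using cnj_mub_mult_mub[of j j k a k] by (simp add: mult.commute)

definition overlap :: "nat \<Rightarrow> nat \<Rightarrow> nat \<Rightarrow> nat \<Rightarrow> complex" where
  "overlap j k J K = (\<Sum>a<d. cnj (mub j k a) * mub J K a)"

lemma cnj_overlap: "cnj (overlap j k J K) = overlap J K j k"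
  unfolding overlap_def by (simp add: mult.commute)

lemma overlap_same_basis:
  assumes "j \<le> d" and k: "k < d" and K: "K < d"
  shows "overlap j k j K = (if k = K then 1 else 0)"
proof (cases "j < d")
  case True
  have "overlap j k j K = (\<Sum>a<d. zeta d ((int k - int K) * int a)) / of_nat d"
    unfolding overlap_def cnj_mub_mult_mub[OF True True] by (simp add: sum_divide_distrib)
  also have "\<dots> = (if int d dvd int k - int K then 1 else 0)"
    using d_pos by (simp add: sum_zeta_mult)
  finally show ?thesis using dvd_int_d_diff_iff_eq[OF K k] by auto
next
  case False
  then have "overlap j k j K = (\<Sum>a<d. if a = k then (if k = K then 1 else 0) else 0)"
    unfolding overlap_def mub_def by (intro sum.cong) auto
  then show ?thesis using k by simp
qed

lemma overlap_standard_basis: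
  assumes "k < d"
  shows "overlap d k J K = mub J K k"
proof -
  have "overlap d k J K = (\<Sum>a<d. if a = k then mub J K k else 0)"
    unfolding overlap_def by (intro sum.cong) (auto simp: mub_def)
  then show ?thesis using assms by simp
qed

lemma overlap_norm_sq_unbiased:
  assumes j: "j \<le> d" and J: "J \<le> d" and "j \<noteq> J" and k: "k < d" and K: "K < d"
  shows "overlap j k J K * cnj (overlap j k J K) = 1 / of_nat d"
proof -
  consider "j < d" "J < d" | "j = d" "J < d" | "J = d" "j < d"
    using j J \<open>j \<noteq> J\<close> by (metis le_neq_implies_less)
  then show ?thesis
  proof cases
    case 1
    define c where "c = (int J - int j) * int inv2"
    define S where "S = (\<Sum>a<d. zeta d (c * (int a)\<^sup>2 + (int k - int K) * int a))"
    have overlap_S: "overlap j k J K = S / of_nat d"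
      unfolding overlap_def cnj_mub_mult_mub[OF 1] S_def c_def by (simp add: sum_divide_distrib)
    have invertible: "int d dvd t" if "int d dvd 2 * c * t" for t
    proof -
      have "(int J - int j) * t = 2 * c * t - int d * ((int J - int j) * t)"
        unfolding c_def using two_inv2 by (simp add: algebra_simps)
      then have "int d dvd (int J - int j) * t"
        using that by (metis dvd_diff dvd_triv_left)
      moreover have "\<not> int d dvd int J - int j"
        using dvd_int_d_diff_iff_eq[OF 1] \<open>j \<noteq> J\<close> by simp
      ultimately show ?thesis
        using prime_d by (simp add: prime_dvd_mult_iff)
    qed
    have "S * cnj S = of_nat d"
      unfolding S_def by (rule quadratic_gauss_sum_norm_sq[OF d_pos invertible])
    then show ?thesis
      unfolding overlap_S using d_pos by (simp add: complex_cnj_divide)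
  next
    case 2
    then show ?thesis using overlap_standard_basis[OF k] mub_norm_sq[of J K k] by simp
  next
    case 3
    then have "overlap j k J K = cnj (mub j k K)"
      using overlap_standard_basis[OF K] cnj_overlap by metis
    then show ?thesis using mub_norm_sq[OF \<open>j < d\<close>] by (simp add: mult.commute)
  qed
qed

subsection \<open>The coefficients \<open>p^j_k\<close>\<close>

definition fourier_part :: "(nat \<Rightarrow> nat \<Rightarrow> real) \<Rightarrow> nat \<Rightarrow> nat \<Rightarrow> complex" where
  "fourier_part \<alpha> j k = (\<Sum>r = 1..d - 1. omg d (\<alpha> j r) * zeta d (int k * int r))"

definition fourier_scale :: complex where
  "fourier_scale = 1 / (of_nat d * complex_of_real (sqrt (real d + 1)))"

lemma pjk_eq_fourier_part: "pjk d \<alpha> j k = 1 / of_nat d + fourier_scale * fourier_part \<alpha> j k"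
proof -
  have "(\<Sum>r = 1..d - 1. omg d (\<alpha> j r + real k * real r)) = fourier_part \<alpha> j k"
    unfolding fourier_part_def by (rule sum.cong) (simp_all add: omg_add zeta_def)
  then show ?thesis unfolding pjk_def fourier_scale_def by simp
qed

lemma fourier_scale_square_mult_d: "fourier_scale * fourier_scale * of_nat d = 1 / (of_nat d * (of_nat d + 1))"
proof -
  define s where "s = complex_of_real (sqrt (real d + 1))"
  have "s * s = of_nat d + 1"
    unfolding s_def of_real_mult[symmetric] by simp
  moreover have "1 / (of_nat d * s) * (1 / (of_nat d * s)) * of_nat d = 1 / (of_nat d * (s * s))"
    using d_pos by (simp add: field_simps)
  ultimately show ?thesis unfolding fourier_scale_def s_def by simp
qed

lemma fourier_part_mod: "fourier_part \<alpha> j ((k + s) mod d) = fourier_part \<alpha> j (k + s)"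
  unfolding fourier_part_def
proof (intro sum.cong refl arg_cong[where f = "\<lambda>z. _ * z"] zeta_cong[OF d_pos])
  fix r
  have "int (k + s) = int ((k + s) mod d) + int d * int ((k + s) div d)"
    by (simp flip: of_nat_mult of_nat_add)
  then have "int ((k + s) mod d) * int r - int (k + s) * int r = int d * (- int ((k + s) div d) * int r)"
    by (simp add: algebra_simps)
  then show "int d dvd int ((k + s) mod d) * int r - int (k + s) * int r" by simp
qed

lemma sum_fourier_part: "(\<Sum>k<d. fourier_part \<alpha> j (k + s)) = 0"
proof -
  have "(\<Sum>k<d. fourier_part \<alpha> j (k + s))
      = (\<Sum>r = 1..d - 1. omg d (\<alpha> j r) * zeta d (int s * int r) * (\<Sum>k<d. zeta d (int r * int k)))"
    unfolding fourier_part_def sum.swap[of _ "{..<d}"] sum_distrib_left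
    by (intro sum.cong refl) (simp add: algebra_simps flip: zeta_add)
  also have "\<dots> = 0"
    using dvd_int_d_iff_eq_0 by (intro sum.neutral) (auto simp: sum_zeta_mult[OF d_pos])
  finally show ?thesis .
qed

lemma dvd_int_d_add_iff:
  assumes "r \<in> {1..d - 1}" and "q \<in> {1..d - 1}"
  shows "int d dvd int r + int q \<longleftrightarrow> q = d - r"
proof
  assume "int d dvd int r + int q"
  then have "int d dvd int r + int q - int d" by (simp add: dvd_diff)
  moreover have "\<bar>int r + int q - int d\<bar> < \<bar>int d\<bar>" using assms by auto
  ultimately have "int r + int q - int d = 0" by (rule dvd_abs_less_imp_zero)
  then show "q = d - r" by simp
next
  assume "q = d - r"
  moreover have "r < d" using assms by auto
  ultimately show "int d dvd int r + int q" by (simp add: of_nat_diff)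
qed

lemma omg_alpha_complement:
  assumes "admissible_alpha d \<alpha>" and "j \<le> d" and "r \<in> {1..d - 1}"
  shows "omg d (\<alpha> j r) * omg d (\<alpha> j (d - r)) = 1"
proof -
  have "\<alpha> j (d - r) = - \<alpha> j r" using assms unfolding admissible_alpha_def by blast
  then show ?thesis unfolding omg_add[symmetric] by (simp add: omg_eq_cis)
qed

text \<open>In the double sum over \<open>r, q\<close> only \<open>q = d - r\<close> survives the sum over \<open>k\<close>, and
  there the phases \<open>\<alpha>^j_r + \<alpha>^j_q\<close> cancel.\<close>

lemma sum_fourier_term:
  assumes adm: "admissible_alpha d \<alpha>" and j: "j \<le> d"
    and r: "r \<in> {1..d - 1}" and q: "q \<in> {1..d - 1}"
  shows "(\<Sum>k<d. omg d (\<alpha> j r) * omg d (\<alpha> j q) * zeta d (int s * int q) * zeta d ((int r + int q) * int k))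
    = (if q = d - r then of_nat d * zeta d (- int s * int r) else 0)"
proof -
  have "(\<Sum>k<d. omg d (\<alpha> j r) * omg d (\<alpha> j q) * zeta d (int s * int q) * zeta d ((int r + int q) * int k))
      = omg d (\<alpha> j r) * omg d (\<alpha> j q) * zeta d (int s * int q) * (if q = d - r then of_nat d else 0)"
    unfolding sum_distrib_left[symmetric] sum_zeta_mult[OF d_pos] dvd_int_d_add_iff[OF r q] ..
  moreover have "zeta d (int s * int q) = zeta d (- int s * int r)" if "q = d - r"
  proof (rule zeta_cong[OF d_pos])
    have "r < d" using r by auto
    then have "int s * int q - - int s * int r = int d * int s"
      using that by (simp add: of_nat_diff algebra_simps)
    then show "int d dvd int s * int q - - int s * int r" by simp
  qed
  ultimately show ?thesis
    using omg_alpha_complement[OF adm j r] by (cases "q = d - r") simp_all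
qed

lemma sum_fourier_part_mult:
  assumes adm: "admissible_alpha d \<alpha>" and j: "j \<le> d"
  shows "(\<Sum>k<d. fourier_part \<alpha> j k * fourier_part \<alpha> j (k + s))
    = of_nat d * ((if int d dvd int s then of_nat d else 0) - 1)"
proof -
  let ?A = "\<lambda>r. omg d (\<alpha> j r)"
  let ?term = "\<lambda>r q k. ?A r * ?A q * zeta d (int s * int q) * zeta d ((int r + int q) * int k)"
  have "(\<Sum>k<d. fourier_part \<alpha> j k * fourier_part \<alpha> j (k + s))
      = (\<Sum>k<d. \<Sum>r = 1..d - 1. \<Sum>q = 1..d - 1. ?term r q k)"
    unfolding fourier_part_def sum_product
    by (intro sum.cong refl) (simp add: algebra_simps flip: zeta_add)
  also have "\<dots> = (\<Sum>r = 1..d - 1. \<Sum>q = 1..d - 1. \<Sum>k<d. ?term r q k)"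
    by (subst sum.swap) (simp only: sum.swap[of _ "{..<d}"])
  also have "\<dots> = (\<Sum>r = 1..d - 1. \<Sum>q = 1..d - 1. if q = d - r then of_nat d * zeta d (- int s * int r) else 0)"
    by (intro sum.cong refl) (rule sum_fourier_term[OF adm j])
  also have "\<dots> = (\<Sum>r = 1..d - 1. of_nat d * zeta d (- int s * int r))"
    by (intro sum.cong refl) auto
  also have "\<dots> = of_nat d * ((\<Sum>r<d. zeta d (- int s * int r)) - 1)"
  proof -
    have "{..<d} = insert 0 {1..d - 1}" using d_pos by auto
    then show ?thesis by (simp add: sum_distrib_left[symmetric])
  qed
  finally show ?thesis unfolding sum_zeta_mult[OF d_pos] by simp
qed

lemma sum_pjk: "(\<Sum>k<d. pjk d \<alpha> j k) = 1"
  using sum_fourier_part[of \<alpha> j 0] d_pos by (simp add: pjk_eq_fourier_part sum.distrib flip: sum_distrib_left)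

lemma sum_pjk_mult_shift:
  assumes adm: "admissible_alpha d \<alpha>" and j: "j \<le> d" and s: "s < d"
  shows "(\<Sum>k<d. pjk d \<alpha> j k * pjk d \<alpha> j ((k + s) mod d)) =
    (if s = 0 then 2 else 1) / (of_nat d + 1)"
proof -
  let ?P = "fourier_part \<alpha> j"
  have "(\<Sum>k<d. pjk d \<alpha> j k * pjk d \<alpha> j ((k + s) mod d)) =
      (\<Sum>k<d. 1 / (of_nat d * of_nat d) + (fourier_scale / of_nat d) * ?P (k + 0)
        + (fourier_scale / of_nat d) * ?P (k + s) + (fourier_scale * fourier_scale) * (?P k * ?P (k + s)))"
    by (intro sum.cong refl) (simp add: pjk_eq_fourier_part fourier_part_mod algebra_simps)
  also have "\<dots> = of_nat d * (1 / (of_nat d * of_nat d)) + (fourier_scale / of_nat d) * (\<Sum>k<d. ?P (k + 0))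
      + (fourier_scale / of_nat d) * (\<Sum>k<d. ?P (k + s)) + (fourier_scale * fourier_scale) * (\<Sum>k<d. ?P k * ?P (k + s))"
    by (simp add: sum.distrib sum_distrib_left)
  also have "\<dots> = 1 / of_nat d + fourier_scale * fourier_scale * (of_nat d * ((if s = 0 then of_nat d else 0) - 1))"
    unfolding sum_fourier_part sum_fourier_part_mult[OF adm j] dvd_int_d_iff_eq_0[OF s] using d_pos by simp
  also have "\<dots> = 1 / of_nat d + ((if s = 0 then of_nat d else 0) - 1) / (of_nat d * (of_nat d + 1))"
    by (simp add: mult.assoc[symmetric] fourier_scale_square_mult_d)
  also have "\<dots> = (if s = 0 then 2 else 1) / (of_nat d + 1)"
    using d_pos of_nat_d_plus_1_nonzero by (intro inverse_add_fraction_eq) simp_all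
  finally show ?thesis .
qed

lemma cnj_fourier_part:
  assumes adm: "admissible_alpha d \<alpha>" and j: "j \<le> d"
  shows "cnj (fourier_part \<alpha> j k) = fourier_part \<alpha> j k"
proof -
  have "cnj (fourier_part \<alpha> j k) = (\<Sum>r = 1..d - 1. omg d (\<alpha> j (d - r)) * zeta d (int k * int (d - r)))"
    unfolding fourier_part_def cnj_sum
  proof (intro sum.cong refl)
    fix r assume r: "r \<in> {1..d - 1}"
    have "\<alpha> j (d - r) = - \<alpha> j r" using adm j r unfolding admissible_alpha_def by blast
    then have "cnj (omg d (\<alpha> j r)) = omg d (\<alpha> j (d - r))" by (simp add: cnj_omg)
    moreover have "cnj (zeta d (int k * int r)) = zeta d (int k * int (d - r))"
      unfolding cnj_zeta
    proof (rule zeta_cong[OF d_pos])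
      have "r < d" using r by auto
      then have "- (int k * int r) - int k * int (d - r) = int d * (- int k)"
        by (simp add: of_nat_diff algebra_simps)
      then show "int d dvd - (int k * int r) - int k * int (d - r)" by simp
    qed
    ultimately show "cnj (omg d (\<alpha> j r) * zeta d (int k * int r))
        = omg d (\<alpha> j (d - r)) * zeta d (int k * int (d - r))" by simp
  qed
  also have "\<dots> = fourier_part \<alpha> j k"
    unfolding fourier_part_def using d_pos by (subst sum.atLeastAtMost_rev) simp
  finally show ?thesis .
qed

lemma cnj_pjk:
  assumes "admissible_alpha d \<alpha>" and "j \<le> d"
  shows "cnj (pjk d \<alpha> j k) = pjk d \<alpha> j k"
  using cnj_fourier_part[OF assms] by (simp add: pjk_eq_fourier_part fourier_scale_def complex_cnj_divide)

lemma sum_pjk_square: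
  assumes "admissible_alpha d \<alpha>" and "j \<le> d"
  shows "(\<Sum>k<d. pjk d \<alpha> j k * pjk d \<alpha> j k) = 2 / (of_nat d + 1)"
  using sum_pjk_mult_shift[OF assms, of 0] d_pos by simp

lemma sum_atMost_d_inverse: "(\<Sum>j\<le>d. 1 / (of_nat d + 1) :: complex) = 1"
  using of_nat_d_plus_1_nonzero by (simp add: field_simps)

subsection \<open>The operator \<open>\<rho>\<close>\<close>

definition rho_coeff :: "(nat \<Rightarrow> nat \<Rightarrow> real) \<Rightarrow> nat \<Rightarrow> nat \<Rightarrow> complex" where
  "rho_coeff \<alpha> j k = pjk d \<alpha> j k - 1 / (of_nat d + 1)"

lemma rho_entry:
  assumes "a < d" and "b < d"
  shows "rho d \<alpha> $$ (a, b) = (\<Sum>j\<le>d. \<Sum>k<d. rho_coeff \<alpha> j k * (mub j k a * cnj (mub j k b)))"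
  unfolding rho_def rho_coeff_def using assms by (simp add: Proj_entry)

lemma rho_carrier: "rho d \<alpha> \<in> carrier_mat d d"
  unfolding rho_def by simp

lemma sum_rho_coeff: "(\<Sum>k<d. rho_coeff \<alpha> j k) = 1 / (of_nat d + 1)"
proof -
  have "(\<Sum>k<d. rho_coeff \<alpha> j k) = 1 - of_nat d / (of_nat d + 1)"
    unfolding rho_coeff_def sum_subtractf sum_pjk by simp
  also have "\<dots> = 1 / (of_nat d + 1)"
    using of_nat_d_plus_1_nonzero by (simp add: field_simps)
  finally show ?thesis .
qed

lemma rho_hermitian:
  assumes adm: "admissible_alpha d \<alpha>"
  shows "hermitian_mat d (rho d \<alpha>)"
  unfolding hermitian_mat_def
proof (intro conjI rho_carrier allI impI)
  fix a b assume "a < d" and "b < d"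
  have "cnj (rho_coeff \<alpha> j k) = rho_coeff \<alpha> j k" if "j \<le> d" for j k
    using cnj_pjk[OF adm that] by (simp add: rho_coeff_def)
  then show "rho d \<alpha> $$ (a, b) = cnj (rho d \<alpha> $$ (b, a))"
    unfolding rho_entry[OF \<open>a < d\<close> \<open>b < d\<close>] rho_entry[OF \<open>b < d\<close> \<open>a < d\<close>]
    by (simp add: mult.commute)
qed

lemma trace_rho: "mtrace (rho d \<alpha>) = 1"
proof -
  have "mtrace (rho d \<alpha>) = (\<Sum>a<d. \<Sum>j\<le>d. \<Sum>k<d. rho_coeff \<alpha> j k * (mub j k a * cnj (mub j k a)))"
    unfolding mtrace_def using rho_carrier[of \<alpha>] by (intro sum.cong) (auto simp: rho_entry)
  also have "\<dots> = (\<Sum>j\<le>d. \<Sum>k<d. \<Sum>a<d. rho_coeff \<alpha> j k * (mub j k a * cnj (mub j k a)))"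
    by (subst sum.swap) (rule sum.cong[OF refl], rule sum.swap)
  also have "\<dots> = (\<Sum>j\<le>d. \<Sum>k<d. rho_coeff \<alpha> j k * overlap j k j k)"
    unfolding overlap_def by (intro sum.cong refl) (simp add: sum_distrib_left mult.commute)
  also have "\<dots> = (\<Sum>j\<le>d. 1 / (of_nat d + 1))"
    by (intro sum.cong refl) (simp add: overlap_same_basis sum_rho_coeff)
  finally show ?thesis unfolding sum_atMost_d_inverse .
qed

lemma sum_rho_coeff_overlap_norm_sq:
  assumes j: "j \<le> d" and J: "J \<le> d" and K: "K < d"
  shows "(\<Sum>k<d. rho_coeff \<alpha> j k * (overlap j k J K * cnj (overlap j k J K)))
    = (if j = J then rho_coeff \<alpha> J K else 1 / (of_nat d * (of_nat d + 1)))"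
proof (cases "j = J")
  case True
  then have "(\<Sum>k<d. rho_coeff \<alpha> j k * (overlap j k J K * cnj (overlap j k J K)))
      = (\<Sum>k<d. if k = K then rho_coeff \<alpha> J K else 0)"
    using j K by (intro sum.cong refl) (simp add: overlap_same_basis)
  then show ?thesis using True K by simp
next
  case False
  then have "(\<Sum>k<d. rho_coeff \<alpha> j k * (overlap j k J K * cnj (overlap j k J K)))
      = (\<Sum>k<d. rho_coeff \<alpha> j k) / of_nat d"
    using j J K by (simp add: overlap_norm_sq_unbiased sum_divide_distrib)
  then show ?thesis using False by (simp add: sum_rho_coeff)
qed

lemma trace_rho_mult_Proj:
  assumes J: "J \<le> d" and K: "K < d"
  shows "mtrace (rho d \<alpha> * Proj d J K) = pjk d \<alpha> J K"
proof -
  let ?t = "\<lambda>a b j k. rho_coeff \<alpha> j k * (mub j k a * cnj (mub j k b)) * (mub J K b * cnj (mub J K a))"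
  have "mtrace (rho d \<alpha> * Proj d J K) = (\<Sum>a<d. \<Sum>b<d. \<Sum>j\<le>d. \<Sum>k<d. ?t a b j k)"
    by (simp add: mtrace_mult[OF rho_carrier Proj_carrier] rho_entry Proj_entry J K sum_distrib_right)
  also have "\<dots> = (\<Sum>j\<le>d. \<Sum>k<d. \<Sum>a<d. \<Sum>b<d. ?t a b j k)"
    by (rule sum_swap_outer_pairs)
  also have "\<dots> = (\<Sum>j\<le>d. \<Sum>k<d. rho_coeff \<alpha> j k * (overlap j k J K * cnj (overlap j k J K)))"
  proof (intro sum.cong refl)
    fix j k
    have "overlap j k J K * cnj (overlap j k J K)
        = (\<Sum>a<d. \<Sum>b<d. (cnj (mub J K a) * mub j k a) * (cnj (mub j k b) * mub J K b))"
      unfolding cnj_overlap mult.commute[of "overlap j k J K"] unfolding overlap_def sum_product ..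
    then show "(\<Sum>a<d. \<Sum>b<d. ?t a b j k) = rho_coeff \<alpha> j k * (overlap j k J K * cnj (overlap j k J K))"
      by (simp add: sum_distrib_left mult_ac)
  qed
  also have "\<dots> = (\<Sum>j\<le>d. if j = J then rho_coeff \<alpha> J K else 1 / (of_nat d * (of_nat d + 1)))"
    using J K by (intro sum.cong refl) (simp add: sum_rho_coeff_overlap_norm_sq)
  also have "\<dots> = rho_coeff \<alpha> J K + of_nat d * (1 / (of_nat d * (of_nat d + 1)))"
    using J by (simp add: sum.remove[of "{..d}" J])
  also have "\<dots> = pjk d \<alpha> J K"
    using d_pos by (simp add: rho_coeff_def)
  finally show ?thesis .
qed

lemma trace_rho_square:
  assumes adm: "admissible_alpha d \<alpha>"
  shows "mtrace (rho d \<alpha> * rho d \<alpha>) = 1"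
proof -
  let ?\<rho> = "rho d \<alpha>"
  have "mtrace (?\<rho> * ?\<rho>)
      = (\<Sum>a<d. \<Sum>b<d. \<Sum>j\<le>d. \<Sum>k<d. rho_coeff \<alpha> j k * (?\<rho> $$ (a, b) * Proj d j k $$ (b, a)))"
    unfolding mtrace_mult[OF rho_carrier rho_carrier]
  proof (intro sum.cong refl)
    fix a b assume "a \<in> {..<d}" and "b \<in> {..<d}"
    then have "?\<rho> $$ (b, a) = (\<Sum>j\<le>d. \<Sum>k<d. rho_coeff \<alpha> j k * Proj d j k $$ (b, a))"
      by (simp add: rho_entry Proj_entry)
    then show "?\<rho> $$ (a, b) * ?\<rho> $$ (b, a)
        = (\<Sum>j\<le>d. \<Sum>k<d. rho_coeff \<alpha> j k * (?\<rho> $$ (a, b) * Proj d j k $$ (b, a)))"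
      by (simp add: sum_distrib_left mult_ac)
  qed
  also have "\<dots> = (\<Sum>j\<le>d. \<Sum>k<d. \<Sum>a<d. \<Sum>b<d. rho_coeff \<alpha> j k * (?\<rho> $$ (a, b) * Proj d j k $$ (b, a)))"
    by (rule sum_swap_outer_pairs)
  also have "\<dots> = (\<Sum>j\<le>d. \<Sum>k<d. rho_coeff \<alpha> j k * mtrace (?\<rho> * Proj d j k))"
    by (simp add: mtrace_mult[OF rho_carrier Proj_carrier] sum_distrib_left)
  also have "\<dots> = (\<Sum>j\<le>d. \<Sum>k<d. pjk d \<alpha> j k * pjk d \<alpha> j k - pjk d \<alpha> j k / (of_nat d + 1))"
    by (intro sum.cong refl) (simp add: trace_rho_mult_Proj rho_coeff_def algebra_simps)
  also have "\<dots> = (\<Sum>j\<le>d. 1 / (of_nat d + 1))"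
    by (intro sum.cong refl)
      (simp add: sum_subtractf sum_pjk_square[OF adm] sum_pjk flip: sum_divide_distrib diff_divide_distrib)
  finally show ?thesis unfolding sum_atMost_d_inverse .
qed

end

theorem mainTheorem2:
  fixes d :: nat and \<alpha> :: "nat \<Rightarrow> nat \<Rightarrow> real"
  assumes "prime d" and "odd d"
    and "admissible_alpha d \<alpha>"
  defines "\<rho> \<equiv> rho d \<alpha>" and "p \<equiv> pjk d \<alpha>"
  shows "(hermitian_mat d \<rho> \<and> mtrace \<rho> = 1 \<and> mtrace (\<rho> * \<rho>) = 1) \<and>
    (\<forall>j\<le>d. \<forall>k<d. mtrace (\<rho> * Proj d j k) = p j k) \<and>
    (\<forall>j\<le>d. (\<Sum>k<d. (p j k)\<^sup>2) = 2 / (of_nat d + 1)) \<and>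
    (\<forall>j\<le>d. \<forall>r\<in>{1..d-1}. (\<Sum>k<d. p j k * p j ((k + r) mod d)) = 1 / (of_nat d + 1))"
proof -
  interpret odd_prime_dim d
    using assms(1,2) by unfold_locales
  have "r < d" and "r \<noteq> 0" if "r \<in> {1..d-1}" for r
    using that d_pos by auto
  then show ?thesis
    unfolding \<rho>_def p_def
    using rho_hermitian trace_rho trace_rho_square trace_rho_mult_Proj
      sum_pjk_square sum_pjk_mult_shift assms(3)
    by (simp add: power2_eq_square)
qed

end
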